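(* Let $G$ be a finite $2$-connected outerplanar graph and $C$ its Hamilton cycle. Let $D$ be a fixed closed disk in $\mathbb{R}^2$ and let $\sigma: G\to D$ be an embedding of $G$ into $D$ such that $C$ is mapped onto the boundary $\partial D$. Then there is an embedding $\sigma^*: G\to D$ such that (i) $\sigma^*(e)$ is a straight line segment for every $e\in E(G)\setminus E(C)$, and (ii) $\sigma^*(e)=\sigma(e)$ whenever $e\in E(C)$ or $\sigma(e)$ is a straight line segment.
   Context: A finite graph is outerplanar if it can be embedded in the plane with all vertices on the boundary of a common face; a finite $2$-connected outerplanar graph has a unique Hamilton cycle. An embedding of a graph (as a 1-complex) into $D$ is a topological embedding, i.e. vertices go to distinct points and edges to arcs between the images of their endvertices, meeting only at common endpoints. *)

theory Defs
  imports "HOL-Analysis.Analysis"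
begin

text \<open>Finite simple graphs: vertex set V, edge set E of 2-element subsets of V.
  The plane R^2 is represented by the type complex.\<close>

definition simple_graph :: "'v set \<Rightarrow> 'v set set \<Rightarrow> bool" where
  "simple_graph V E \<longleftrightarrow> finite V \<and> (\<forall>e\<in>E. e \<subseteq> V \<and> card e = 2)"

definition graph_connected :: "'v set \<Rightarrow> 'v set set \<Rightarrow> bool" where
  "graph_connected V E \<longleftrightarrow> V \<noteq> {} \<and>
     (\<forall>u\<in>V. \<forall>w\<in>V. (u, w) \<in> ({(x, y). {x, y} \<in> E \<and> x \<in> V \<and> y \<in> V})\<^sup>*)"

definition two_connected :: "'v set \<Rightarrow> 'v set set \<Rightarrow> bool" where
  "two_connected V E \<longleftrightarrow> card V \<ge> 3 \<and> graph_connected V E \<and>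
     (\<forall>x\<in>V. graph_connected (V - {x}) {e\<in>E. x \<notin> e})"

definition hamilton_cycle :: "'v set \<Rightarrow> 'v set set \<Rightarrow> 'v set set \<Rightarrow> bool" where
  "hamilton_cycle V E C \<longleftrightarrow> C \<subseteq> E \<and>
     (\<exists>vs. distinct vs \<and> set vs = V \<and> length vs \<ge> 3 \<and>
        C = {{vs ! i, vs ! ((i + 1) mod length vs)} | i. i < length vs})"

definition graph_embedding ::
  "complex set \<Rightarrow> 'v set \<Rightarrow> 'v set set \<Rightarrow> ('v \<Rightarrow> complex) \<Rightarrow> ('v set \<Rightarrow> complex set) \<Rightarrow> bool" where
  "graph_embedding S V E p A \<longleftrightarrow>
     inj_on p V \<and> p ` V \<subseteq> S \<and>
     (\<forall>e\<in>E. A e \<subseteq> S \<and>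
        (\<exists>u w g. e = {u, w} \<and> arc g \<and> path_image g = A e \<and>
                 pathstart g = p u \<and> pathfinish g = p w)) \<and>
     (\<forall>e\<in>E. \<forall>f\<in>E. e \<noteq> f \<longrightarrow> A e \<inter> A f = p ` (e \<inter> f)) \<and>
     (\<forall>e\<in>E. \<forall>v\<in>V. p v \<in> A e \<longrightarrow> v \<in> e)"

definition embedding_image :: "'v set \<Rightarrow> 'v set set \<Rightarrow> ('v \<Rightarrow> complex) \<Rightarrow> ('v set \<Rightarrow> complex set) \<Rightarrow> complex set" where
  "embedding_image V E p A = p ` V \<union> \<Union>(A ` E)"

definition outerplanar :: "'v set \<Rightarrow> 'v set set \<Rightarrow> bool" where
  "outerplanar V E \<longleftrightarrow> (\<exists>p A. graph_embedding UNIV V E p A \<and>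
     (\<exists>F \<in> components (- embedding_image V E p A). p ` V \<subseteq> frontier F))"

definition straight_segment :: "complex set \<Rightarrow> bool" where
  "straight_segment X \<longleftrightarrow> (\<exists>a b. a \<noteq> b \<and> X = closed_segment a b)"

end

theory Submission
  imports Defs
begin

text \<open>
  Every vertex lies on an edge of the Hamilton cycle \<open>C\<close>, which is drawn on the circle, so all
  vertices are drawn on the boundary. Keep the vertices and the drawing of \<open>C\<close>, and redraw every
  other edge as the chord between its end points. By strict convexity of the disk a chord meets
  the circle only in its end points, and two chords with a common end point meet only there. Two
  chords with four distinct end points cannot cross: otherwise the original drawings of the two
  edges, disjoint paths in the disk between interlaced boundary points, would have to meet, by the
  Fashoda meet theorem applied after extending both paths along their chords to the sides of a
  large parallelogram. An edge that is already drawn straight is the chord itself.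
\<close>

section \<open>Chords of a disk\<close>

lemma open_segment_subset_ball:
  fixes a b z :: "'a::euclidean_space"
  assumes "a \<in> cball z r" "b \<in> cball z r"
  shows "open_segment a b \<subseteq> ball z r"
proof
  fix y assume "y \<in> open_segment a b"
  then show "y \<in> ball z r"
    using dist_decreases_open_segment[of y a b z] assms by auto
qed

lemma closed_segment_inter_sphere:
  fixes a b y z :: "'a::euclidean_space"
  assumes "a \<in> cball z r" "b \<in> cball z r" "y \<in> closed_segment a b" "y \<in> sphere z r"
  shows "y = a \<or> y = b"
  using open_segment_subset_ball[OF assms(1,2)] assms(3,4) by (auto simp: closed_segment_eq_open)

lemma segment_along_line:
  fixes x v :: "'a::real_vector"
  shows "closed_segment (x + l *\<^sub>R v) (x + m *\<^sub>R v) = (\<lambda>\<mu>. x + \<mu> *\<^sub>R v) ` closed_segment l m"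
proof -
  have "closed_segment (l *\<^sub>R v) (m *\<^sub>R v) = (\<lambda>\<mu>. \<mu> *\<^sub>R v) ` closed_segment l m"
    by (rule closed_segment_linear_image) simp
  then show ?thesis
    by (simp add: closed_segment_translation image_image)
qed

lemma line_point_between_in_ball:
  fixes x v z :: "'a::euclidean_space"
  assumes "v \<noteq> 0" "l < m" "m < n" "x + l *\<^sub>R v \<in> cball z r" "x + n *\<^sub>R v \<in> cball z r"
  shows "x + m *\<^sub>R v \<in> ball z r"
proof -
  have "x + m *\<^sub>R v \<in> open_segment (x + l *\<^sub>R v) (x + n *\<^sub>R v)"
    using assms(1-3) by (auto simp: open_segment_def segment_along_line closed_segment_eq_real_ivl)
  then show ?thesis
    using open_segment_subset_ball[OF assms(4,5)] by blast
qed

lemma line_sphere_at_most_two: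
  fixes x v z :: "'a::euclidean_space"
  assumes "v \<noteq> 0" "x + l *\<^sub>R v \<in> sphere z r" "x + m *\<^sub>R v \<in> sphere z r" "x + n *\<^sub>R v \<in> sphere z r"
  shows "l = m \<or> m = n \<or> l = n"
proof (rule ccontr)
  have no_middle: False if "i < j" "j < k" "x + i *\<^sub>R v \<in> sphere z r"
    "x + j *\<^sub>R v \<in> sphere z r" "x + k *\<^sub>R v \<in> sphere z r" for i j k
    using line_point_between_in_ball[OF assms(1) that(1,2), of x z r] that(3-5) by auto
  assume "\<not> ?thesis"
  then consider "l < m" "m < n" | "l < n" "n < m" | "m < l" "l < n"
    | "m < n" "n < l" | "n < l" "l < m" | "n < m" "m < l"
    by linarith
  then show False
    by cases (metis no_middle assms(2-4))+
qed

lemma chords_common_endpoint: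
  fixes a b d z :: "'a::euclidean_space"
  assumes "a \<in> sphere z r" "b \<in> sphere z r" "d \<in> sphere z r" "a \<noteq> b" "a \<noteq> d" "b \<noteq> d"
  shows "closed_segment a b \<inter> closed_segment a d = {a}"
proof (rule ccontr)
  assume "closed_segment a b \<inter> closed_segment a d \<noteq> {a}"
  then obtain y where y: "y \<in> closed_segment a b" "y \<in> closed_segment a d" "y \<noteq> a"
    by auto
  obtain \<sigma> where \<sigma>: "y = a + \<sigma> *\<^sub>R (b - a)"
    using y(1) by (auto simp: in_segment algebra_simps)
  obtain \<tau> where \<tau>: "y = a + \<tau> *\<^sub>R (d - a)"
    using y(2) by (auto simp: in_segment algebra_simps)
  have "\<sigma> \<noteq> 0"
    using \<sigma> y(3) by auto
  have "b - a = inverse \<sigma> *\<^sub>R (\<sigma> *\<^sub>R (b - a))"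
    using \<open>\<sigma> \<noteq> 0\<close> by simp
  also have "\<dots> = (\<tau> / \<sigma>) *\<^sub>R (d - a)"
    using \<sigma> \<tau> by (metis add_left_cancel scaleR_scaleR divide_inverse_commute)
  finally have b: "b = a + (\<tau> / \<sigma>) *\<^sub>R (d - a)"
    by (simp add: algebra_simps)
  have "0 = (1::real) \<or> 1 = \<tau> / \<sigma> \<or> 0 = \<tau> / \<sigma>"
    by (rule line_sphere_at_most_two[of "d - a" a 0 z r 1]) (use assms b in auto)
  then show False
    using assms(4,6) b by auto
qed

section \<open>Crossing chords\<close>

text \<open>\<open>Im (v * cnj w)\<close> is the determinant of \<open>v\<close> and \<open>w\<close> as vectors of \<open>\<real>\<^sup>2\<close>; this is Cramer's rule.\<close>

lemma Im_cnj_decomposition: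
  fixes u v w :: complex
  shows "Im (v * cnj w) *\<^sub>R u = Im (u * cnj w) *\<^sub>R v + Im (v * cnj u) *\<^sub>R w"
  by (simp add: complex_eq_iff algebra_simps)

lemma Im_cnj_eq_0_imp_parallel:
  fixes v w :: complex
  assumes "Im (v * cnj w) = 0" "w \<noteq> 0"
  shows "v = (Re (v * cnj w) / (cmod w)\<^sup>2) *\<^sub>R w"
proof -
  have scaled: "(cmod w)\<^sup>2 *\<^sub>R v = Re (v * cnj w) *\<^sub>R w"
    using assms(1) unfolding cmod_power2 by (simp add: complex_eq_iff algebra_simps) algebra
  have "v = inverse ((cmod w)\<^sup>2) *\<^sub>R ((cmod w)\<^sup>2 *\<^sub>R v)"
    using assms(2) by simp
  also have "\<dots> = (Re (v * cnj w) / (cmod w)\<^sup>2) *\<^sub>R w"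
    unfolding scaled by (simp only: scaleR_scaleR divide_inverse_commute)
  finally show ?thesis .
qed

lemma abs_Im_mult_cnj_le:
  fixes u w :: complex
  shows "\<bar>Im (u * cnj w)\<bar> \<le> cmod u * cmod w"
  by (metis abs_Im_le_cmod complex_mod_cnj norm_mult)

lemma Im_cnj_neq_0_imp_independent:
  fixes v w :: complex
  assumes "Im (v * cnj w) \<noteq> 0" "\<alpha> *\<^sub>R v + \<beta> *\<^sub>R w = 0"
  shows "\<alpha> = 0 \<and> \<beta> = 0"
proof -
  have "Im ((\<alpha> *\<^sub>R v + \<beta> *\<^sub>R w) * cnj w) = \<alpha> * Im (v * cnj w)"
       "Im (v * cnj (\<alpha> *\<^sub>R v + \<beta> *\<^sub>R w)) = \<beta> * Im (v * cnj w)"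
    by (simp_all add: algebra_simps)
  then show ?thesis
    using assms by simp
qed

lemma fashoda_affine_image:
  fixes \<Phi> :: "real^2 \<Rightarrow> 'a::euclidean_space"
  assumes "linear \<Phi>" "inj \<Phi>" "path f" "path g"
    and "path_image f \<subseteq> (\<lambda>y. x + \<Phi> y) ` cbox lo hi" "path_image g \<subseteq> (\<lambda>y. x + \<Phi> y) ` cbox lo hi"
    and "pathstart f = x + \<Phi> pf" "pathfinish f = x + \<Phi> qf" "pf$1 = lo$1" "qf$1 = hi$1"
    and "pathstart g = x + \<Phi> pg" "pathfinish g = x + \<Phi> qg" "pg$2 = lo$2" "qg$2 = hi$2"
  shows "path_image f \<inter> path_image g \<noteq> {}"
proof -
  obtain \<psi> where \<psi>: "linear \<psi>" "\<psi> \<circ> \<Phi> = id"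
    using linear_injective_left_inverse[OF assms(1,2)] by blast
  define coord where "coord z = \<psi> (z - x)" for z
  have coord: "coord (x + \<Phi> y) = y" for y
    using \<psi>(2) by (simp add: coord_def pointfree_idE)
  have pulled_back: "path (coord \<circ> h)" "path_image (coord \<circ> h) \<subseteq> cbox lo hi"
    if "path h" "path_image h \<subseteq> (\<lambda>y. x + \<Phi> y) ` cbox lo hi" for h
  proof -
    have "continuous_on {0..1} (\<lambda>t. \<psi> (h t - x))"
      by (rule linear_continuous_on_compose[OF _ \<psi>(1)])
         (use that(1) in \<open>auto simp: path_def intro!: continuous_intros\<close>)
    then show "path (coord \<circ> h)"
      by (simp add: path_def coord_def o_def)
    show "path_image (coord \<circ> h) \<subseteq> cbox lo hi"
      unfolding path_image_compose using that(2) coord by auto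
  qed
  obtain z where z: "z \<in> path_image (coord \<circ> f)" "z \<in> path_image (coord \<circ> g)"
    by (rule fashoda[OF pulled_back(1)[OF assms(3,5)] pulled_back(1)[OF assms(4,6)]
                        pulled_back(2)[OF assms(3,5)] pulled_back(2)[OF assms(4,6)]])
       (simp_all only: pathstart_compose pathfinish_compose assms(7-14) coord)
  then obtain p q where "p \<in> path_image f" "q \<in> path_image g" "coord p = z" "coord q = z"
    by (auto simp: path_image_compose)
  moreover have "p = q"
  proof -
    obtain y y' where "p = x + \<Phi> y" "q = x + \<Phi> y'"
      using assms(5,6) \<open>p \<in> path_image f\<close> \<open>q \<in> path_image g\<close> by blast
    then show "p = q"
      using \<open>coord p = z\<close> \<open>coord q = z\<close> coord by simp
  qed
  ultimately show ?thesis
    by blast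
qed

lemma sphere_points_not_collinear:
  fixes a c d z :: complex
  assumes "a \<in> sphere z r" "c \<in> sphere z r" "d \<in> sphere z r" "a \<noteq> c" "a \<noteq> d" "c \<noteq> d"
  shows "Im ((a - c) * cnj (d - c)) \<noteq> 0"
proof
  assume "Im ((a - c) * cnj (d - c)) = 0"
  define \<kappa> where "\<kappa> = Re ((a - c) * cnj (d - c)) / (cmod (d - c))\<^sup>2"
  have "a - c = \<kappa> *\<^sub>R (d - c)"
    unfolding \<kappa>_def by (rule Im_cnj_eq_0_imp_parallel) (use assms(6) \<open>Im _ = 0\<close> in auto)
  then have "a = c + \<kappa> *\<^sub>R (d - c)" "c = c + 0 *\<^sub>R (d - c)" "d = c + 1 *\<^sub>R (d - c)"
    by (simp_all add: algebra_simps)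
  then have "\<kappa> = 0 \<or> 0 = (1::real) \<or> \<kappa> = 1"
    using line_sphere_at_most_two[of "d - c" c \<kappa> z r 0 1] assms by auto
  then show False
    using \<open>a = c + \<kappa> *\<^sub>R (d - c)\<close> assms(4,5) by auto
qed

lemma crossing_chords_transversal:
  fixes a b c d x z :: complex
  assumes sphere: "a \<in> sphere z r" "b \<in> sphere z r" "c \<in> sphere z r" "d \<in> sphere z r"
    and distinct: "a \<noteq> b" "a \<noteq> c" "a \<noteq> d" "b \<noteq> c" "b \<noteq> d" "c \<noteq> d"
    and x: "x \<in> closed_segment a b" "x \<in> closed_segment c d"
  obtains s t where "0 < s" "s < 1" "a = x - s *\<^sub>R (b - a)"
    and "0 < t" "t < 1" "c = x - t *\<^sub>R (d - c)"
    and "Im ((b - a) * cnj (d - c)) \<noteq> 0"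
proof -
  have interior_parameter: "\<exists>s. 0 < s \<and> s < 1 \<and> p = y - s *\<^sub>R (q - p)"
    if y: "y \<in> closed_segment p q" "y \<notin> {p, q}" for p q y
  proof -
    have "y \<in> open_segment p q"
      using y by (simp add: open_segment_def)
    then obtain s where "0 < s" "s < 1" "y = (1 - s) *\<^sub>R p + s *\<^sub>R q"
      by (auto simp: in_segment)
    then show ?thesis
      by (intro exI[of _ s]) (simp add: algebra_simps)
  qed
  have "x \<notin> {a, b}"
    using closed_segment_inter_sphere[of c z r d x] sphere distinct x(2) by auto
  moreover have "x \<notin> {c, d}"
    using closed_segment_inter_sphere[of a z r b x] sphere distinct x(1) by auto
  ultimately obtain s t where st: "0 < s" "s < 1" "a = x - s *\<^sub>R (b - a)"
    "0 < t" "t < 1" "c = x - t *\<^sub>R (d - c)"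
    using interior_parameter x by meson
  have "a - c = (x - s *\<^sub>R (b - a)) - (x - t *\<^sub>R (d - c))"
    by (simp only: st(3,6)[symmetric])
  moreover have "Im ((x - s *\<^sub>R v - (x - t *\<^sub>R w)) * cnj w) = - s * Im (v * cnj w)" for v w
    by (simp add: algebra_simps)
  ultimately have "Im ((a - c) * cnj (d - c)) = - s * Im ((b - a) * cnj (d - c))"
    by (simp only:)
  then have "Im ((b - a) * cnj (d - c)) \<noteq> 0"
    using sphere_points_not_collinear[OF sphere(1,3,4) distinct(2,3,6)] by auto
  then show thesis
    using that st by blast
qed

definition plane_coordinates :: "complex \<Rightarrow> complex \<Rightarrow> real^2 \<Rightarrow> complex" where
  "plane_coordinates v w y = y$1 *\<^sub>R v + y$2 *\<^sub>R w"

lemma linear_plane_coordinates: "linear (plane_coordinates v w)"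
  by (auto simp: plane_coordinates_def intro!: linearI simp: algebra_simps)

lemma inj_plane_coordinates:
  assumes "Im (v * cnj w) \<noteq> 0"
  shows "inj (plane_coordinates v w)"
proof (rule injI)
  fix y y' assume "plane_coordinates v w y = plane_coordinates v w y'"
  then have "(y$1 - y'$1) *\<^sub>R v + (y$2 - y'$2) *\<^sub>R w = 0"
    by (simp add: plane_coordinates_def algebra_simps)
  then have "y$1 = y'$1" "y$2 = y'$2"
    using Im_cnj_neq_0_imp_independent[OF assms] by force+
  then show "y = y'"
    by (simp add: vec_eq_iff forall_2)
qed

lemma cball_subset_parallelogram:
  assumes "Im (v * cnj w) \<noteq> 0" "x \<in> cball z r"
  obtains L where "1 \<le> L"
    "cball z r \<subseteq> (\<lambda>y. x + plane_coordinates v w y) ` cbox (vector [-L, -L]) (vector [L, L])"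
proof
  define D where "D = Im (v * cnj w)"
  define L where "L = max 1 (2 * r * (cmod v + cmod w) / \<bar>D\<bar>)"
  show "1 \<le> L"
    by (simp add: L_def)
  show "cball z r \<subseteq> (\<lambda>y. x + plane_coordinates v w y) ` cbox (vector [-L, -L]) (vector [L, L])"
  proof
    fix q assume q: "q \<in> cball z r"
    define y :: "real^2" where "y = vector [Im ((q - x) * cnj w) / D, Im (v * cnj (q - x)) / D]"
    have "D *\<^sub>R (q - x) = D *\<^sub>R plane_coordinates v w y"
      using Im_cnj_decomposition[of v w "q - x"] assms(1)
      by (simp add: plane_coordinates_def y_def D_def scaleR_add_right)
    then have "q - x = plane_coordinates v w y"
      using assms(1) by (simp add: D_def)
    then have q_eq: "q = x + plane_coordinates v w y"
      by (metis add.commute diff_add_cancel)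
    have "0 \<le> r"
      using assms(2) zero_le_dist[of z x] by (simp only: mem_cball)
    have qx: "cmod (q - x) \<le> 2 * r"
      using q assms(2) dist_triangle[of q x z] by (simp add: dist_norm norm_minus_commute)
    have "\<bar>Im ((q - x) * cnj w)\<bar> \<le> cmod (q - x) * cmod w"
      by (rule abs_Im_mult_cnj_le)
    also have "\<dots> \<le> 2 * r * (cmod v + cmod w)"
      using qx \<open>0 \<le> r\<close> by (intro mult_mono) auto
    finally have bound1: "\<bar>Im ((q - x) * cnj w)\<bar> \<le> 2 * r * (cmod v + cmod w)" .
    have "\<bar>Im (v * cnj (q - x))\<bar> \<le> cmod v * cmod (q - x)"
      by (rule abs_Im_mult_cnj_le)
    also have "\<dots> \<le> 2 * r * (cmod v + cmod w)"
      using qx \<open>0 \<le> r\<close> by (subst mult.commute, intro mult_mono) auto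
    finally have bound2: "\<bar>Im (v * cnj (q - x))\<bar> \<le> 2 * r * (cmod v + cmod w)" .
    have "\<bar>y$1\<bar> \<le> L" "\<bar>y$2\<bar> \<le> L"
      using bound1 bound2
      by (auto simp: y_def L_def abs_divide divide_right_mono intro: max.coboundedI2)
    then show "q \<in> (\<lambda>y. x + plane_coordinates v w y) ` cbox (vector [-L, -L]) (vector [L, L])"
      unfolding q_eq by (intro imageI) (auto simp: mem_box_cart forall_2 abs_le_iff)
  qed
qed

definition chord_extension :: "complex \<Rightarrow> complex \<Rightarrow> real \<Rightarrow> (real \<Rightarrow> complex) \<Rightarrow> real \<Rightarrow> complex" where
  "chord_extension x v L g = linepath (x + (-L) *\<^sub>R v) (pathstart g) +++ g +++ linepath (pathfinish g) (x + L *\<^sub>R v)"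

lemma chord_extension_properties:
  assumes "path g" "pathstart g = x + (-s) *\<^sub>R v" "pathfinish g = x + (1 - s) *\<^sub>R v"
    and "0 < s" "s < 1" "1 \<le> L"
  shows "path (chord_extension x v L g)"
    and "pathstart (chord_extension x v L g) = x + (-L) *\<^sub>R v"
    and "pathfinish (chord_extension x v L g) = x + L *\<^sub>R v"
    and "path_image (chord_extension x v L g) = (\<lambda>\<mu>. x + \<mu> *\<^sub>R v) ` ({-L..-s} \<union> {1 - s..L}) \<union> path_image g"
proof -
  show "path (chord_extension x v L g)"
    "pathstart (chord_extension x v L g) = x + (-L) *\<^sub>R v"
    "pathfinish (chord_extension x v L g) = x + L *\<^sub>R v"
    using assms(1) by (simp_all add: chord_extension_def)
  have "path_image (chord_extension x v L g)
      = closed_segment (x + (-L) *\<^sub>R v) (x + (-s) *\<^sub>R v) \<union> closed_segment (x + (1 - s) *\<^sub>R v) (x + L *\<^sub>R v)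
        \<union> path_image g"
    using assms(1-3) by (auto simp: chord_extension_def path_image_join)
  also have "\<dots> = (\<lambda>\<mu>. x + \<mu> *\<^sub>R v) ` ({-L..-s} \<union> {1 - s..L}) \<union> path_image g"
    using assms(4-6) unfolding segment_along_line by (simp add: closed_segment_eq_real_ivl image_Un)
  finally show "path_image (chord_extension x v L g)
      = (\<lambda>\<mu>. x + \<mu> *\<^sub>R v) ` ({-L..-s} \<union> {1 - s..L}) \<union> path_image g" .
qed

lemma chord_extension_inter_cball:
  fixes x v z :: complex
  assumes "path g" "pathstart g = x + (-s) *\<^sub>R v" "pathfinish g = x + (1 - s) *\<^sub>R v"
    and "0 < s" "s < 1" "1 \<le> L" "v \<noteq> 0"
    and "x + (-s) *\<^sub>R v \<in> sphere z r" "x + (1 - s) *\<^sub>R v \<in> sphere z r"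
  shows "path_image (chord_extension x v L g) \<inter> cball z r \<subseteq> path_image g"
proof
  fix q assume q: "q \<in> path_image (chord_extension x v L g) \<inter> cball z r"
  show "q \<in> path_image g"
  proof (cases "q \<in> path_image g")
    case False
    then obtain \<mu> where \<mu>: "\<mu> \<in> {-L..-s} \<union> {1 - s..L}" "q = x + \<mu> *\<^sub>R v"
      using q chord_extension_properties(4)[OF assms(1-6)] by blast
    have "\<not> \<mu> < -s"
      using line_point_between_in_ball[OF assms(7), of \<mu> "-s" "1 - s" x z r] assms(5,8,9) q \<mu>(2)
      by auto
    moreover have "\<not> 1 - s < \<mu>"
      using line_point_between_in_ball[OF assms(7), of "-s" "1 - s" \<mu> x z r] assms(5,8,9) q \<mu>(2)
      by auto
    ultimately have "q = pathstart g \<or> q = pathfinish g"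
      using \<mu> assms(2,3) by auto
    then show ?thesis
      using pathstart_in_path_image pathfinish_in_path_image by metis
  qed
qed

lemma paths_meet_if_chords_cross:
  fixes a b c d z :: complex and g h :: "real \<Rightarrow> complex"
  assumes sphere: "a \<in> sphere z r" "b \<in> sphere z r" "c \<in> sphere z r" "d \<in> sphere z r"
    and distinct: "a \<noteq> b" "a \<noteq> c" "a \<noteq> d" "b \<noteq> c" "b \<noteq> d" "c \<noteq> d"
    and cross: "closed_segment a b \<inter> closed_segment c d \<noteq> {}"
    and g: "path g" "path_image g \<subseteq> cball z r" "pathstart g = a" "pathfinish g = b"
    and h: "path h" "path_image h \<subseteq> cball z r" "pathstart h = c" "pathfinish h = d"
  shows "path_image g \<inter> path_image h \<noteq> {}"
proof
  assume disjoint: "path_image g \<inter> path_image h = {}"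
  obtain x where x: "x \<in> closed_segment a b" "x \<in> closed_segment c d"
    using cross by blast
  obtain s t where st: "0 < s" "s < 1" "a = x - s *\<^sub>R (b - a)"
    "0 < t" "t < 1" "c = x - t *\<^sub>R (d - c)" and D: "Im ((b - a) * cnj (d - c)) \<noteq> 0"
    using crossing_chords_transversal[OF sphere distinct x] by blast
  define v w where "v = b - a" and "w = d - c"
  have "v \<noteq> 0" "w \<noteq> 0" and transversal: "Im (v * cnj w) \<noteq> 0"
    using distinct D by (auto simp: v_def w_def)
  have on_lines: "a = x + (- s) *\<^sub>R v" "b = x + (1 - s) *\<^sub>R v"
    "c = x + (- t) *\<^sub>R w" "d = x + (1 - t) *\<^sub>R w"
    using st by (simp_all add: v_def w_def algebra_simps)
  have "x \<in> cball z r"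
    using x(1) sphere(1,2) convex_cball[of z r] closed_segment_subset[of a "cball z r" b] by auto
  then obtain L where "1 \<le> L" and cball_in_P:
    "cball z r \<subseteq> (\<lambda>y. x + plane_coordinates v w y) ` cbox (vector [-L, -L]) (vector [L, L])"
    using cball_subset_parallelogram[OF transversal] by blast
  define P where "P = (\<lambda>y. x + plane_coordinates v w y) ` cbox (vector [-L, -L]) (vector [L, L])"
  have axes_in_P: "x + \<mu> *\<^sub>R v \<in> P" "x + \<mu> *\<^sub>R w \<in> P" if "\<bar>\<mu>\<bar> \<le> L" for \<mu>
  proof -
    have "(vector [\<mu>, 0] :: real^2) \<in> cbox (vector [-L, -L]) (vector [L, L])"
      "(vector [0, \<mu>] :: real^2) \<in> cbox (vector [-L, -L]) (vector [L, L])"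
      using that \<open>1 \<le> L\<close> by (simp_all add: mem_box_cart forall_2 abs_le_iff)
    then show "x + \<mu> *\<^sub>R v \<in> P" "x + \<mu> *\<^sub>R w \<in> P"
      by (force simp: P_def plane_coordinates_def)+
  qed
  define F G where "F = chord_extension x v L g" and "G = chord_extension x w L h"
  define Ev Ew where "Ev = (\<lambda>\<mu>. x + \<mu> *\<^sub>R v) ` ({-L..-s} \<union> {1 - s..L})"
    and "Ew = (\<lambda>\<nu>. x + \<nu> *\<^sub>R w) ` ({-L..-t} \<union> {1 - t..L})"
  note F = chord_extension_properties[OF g(1) g(3,4)[unfolded on_lines] st(1,2) \<open>1 \<le> L\<close>, folded F_def Ev_def]
  note G = chord_extension_properties[OF h(1) h(3,4)[unfolded on_lines] st(4,5) \<open>1 \<le> L\<close>, folded G_def Ew_def]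
  have "Ev \<subseteq> P" "Ew \<subseteq> P"
    unfolding Ev_def Ew_def using axes_in_P st \<open>1 \<le> L\<close> by auto
  then have "path_image F \<subseteq> P" "path_image G \<subseteq> P"
    unfolding F(4) G(4) using g(2) h(2) cball_in_P[folded P_def] by auto
  then have "path_image F \<inter> path_image G \<noteq> {}"
    unfolding P_def
    by (rule fashoda_affine_image[OF linear_plane_coordinates inj_plane_coordinates[OF transversal] F(1) G(1),
          where pf = "vector [-L, 0]" and qf = "vector [L, 0]" and pg = "vector [0, -L]" and qg = "vector [0, L]"])
       (simp_all add: F(2,3) G(2,3) plane_coordinates_def)
  then obtain p where p: "p \<in> path_image F" "p \<in> path_image G"
    by blast
  have "path_image F \<inter> cball z r \<subseteq> path_image g" "path_image G \<inter> cball z r \<subseteq> path_image h"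
    using chord_extension_inter_cball[OF g(1) g(3,4)[unfolded on_lines] st(1,2) \<open>1 \<le> L\<close> \<open>v \<noteq> 0\<close>
        sphere(1,2)[unfolded on_lines]]
      chord_extension_inter_cball[OF h(1) h(3,4)[unfolded on_lines] st(4,5) \<open>1 \<le> L\<close> \<open>w \<noteq> 0\<close>
        sphere(3,4)[unfolded on_lines]]
    unfolding F_def G_def .
  have "Ev \<inter> Ew = {}"
  proof (rule equals0I)
    fix q assume "q \<in> Ev \<inter> Ew"
    then obtain \<mu> \<nu> where "\<mu> \<in> {-L..-s} \<union> {1 - s..L}" "q = x + \<mu> *\<^sub>R v" "q = x + \<nu> *\<^sub>R w"
      unfolding Ev_def Ew_def by blast
    moreover from this have "\<mu> = 0"
      using Im_cnj_neq_0_imp_independent[OF transversal, of \<mu> "- \<nu>"] by simp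
    ultimately show False
      using st(1,2) by auto
  qed
  then have "p \<in> path_image g \<union> path_image h"
    using p F(4) G(4) by blast
  then have "p \<in> path_image g \<inter> path_image h"
    using p g(2) h(2) \<open>path_image F \<inter> cball z r \<subseteq> path_image g\<close>
      \<open>path_image G \<inter> cball z r \<subseteq> path_image h\<close> by blast
  then show False
    using disjoint by blast
qed

section \<open>Redrawing the edges off the circle as chords\<close>

lemma hamilton_cycle_covers_vertices:
  assumes "hamilton_cycle V E C" "v \<in> V"
  shows "\<exists>e\<in>C. v \<in> e"
proof -
  obtain vs where vs: "set vs = V" "C = {{vs ! i, vs ! ((i + 1) mod length vs)} | i. i < length vs}"
    using assms(1) unfolding hamilton_cycle_def by blast
  obtain i where "i < length vs" "vs ! i = v"
    using assms(2) vs(1) by (metis in_set_conv_nth)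
  then show ?thesis
    unfolding vs(2) by blast
qed

lemma graph_embedding_edgeD:
  assumes "graph_embedding S V E p A" "e \<in> E"
  shows "A e \<subseteq> S"
    and "\<exists>u w g. e = {u, w} \<and> arc g \<and> path_image g = A e \<and> pathstart g = p u \<and> pathfinish g = p w"
  using assms unfolding graph_embedding_def by auto

lemma graph_embedding_interD:
  "graph_embedding S V E p A \<Longrightarrow> e \<in> E \<Longrightarrow> f \<in> E \<Longrightarrow> e \<noteq> f \<Longrightarrow> A e \<inter> A f = p ` (e \<inter> f)"
  unfolding graph_embedding_def by blast

lemma graph_embedding_vertexD:
  "graph_embedding S V E p A \<Longrightarrow> e \<in> E \<Longrightarrow> v \<in> V \<Longrightarrow> p v \<in> A e \<Longrightarrow> v \<in> e"
  unfolding graph_embedding_def by blast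

lemma graph_embedding_vertex_in_edge_image:
  assumes "graph_embedding S V E p A" "e \<in> E" "v \<in> e"
  shows "p v \<in> A e"
proof -
  obtain u w g where "e = {u, w}" "path_image g = A e" "pathstart g = p u" "pathfinish g = p w"
    using graph_embedding_edgeD(2)[OF assms(1,2)] by blast
  then show ?thesis
    using assms(3) pathstart_in_path_image[of g] pathfinish_in_path_image[of g] by auto
qed

definition chord_drawing ::
  "'v set set \<Rightarrow> ('v \<Rightarrow> complex) \<Rightarrow> ('v set \<Rightarrow> complex set) \<Rightarrow> 'v set \<Rightarrow> complex set" where
  "chord_drawing C p A e = (if e \<in> C then A e else convex hull (p ` e))"

locale boundary_vertex_embedding =
  fixes V :: "'v set" and E :: "'v set set" and p :: "'v \<Rightarrow> complex"
    and A :: "'v set \<Rightarrow> complex set" and z :: complex and r :: real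
  assumes simple: "simple_graph V E"
    and embedding: "graph_embedding (cball z r) V E p A"
    and vertices_on_sphere: "p ` V \<subseteq> sphere z r"
begin

lemma edge_ends:
  assumes "e \<in> E"
  obtains u w where "e = {u, w}" "u \<noteq> w" "u \<in> V" "w \<in> V"
  using simple assms by (auto simp: simple_graph_def card_2_iff)

lemma vertex_images_distinct:
  "u \<in> V \<Longrightarrow> w \<in> V \<Longrightarrow> u \<noteq> w \<Longrightarrow> p u \<noteq> p w"
  using embedding by (auto simp: graph_embedding_def inj_on_def)

lemma edge_image_is_arc:
  assumes "e \<in> E"
  obtains u w g where "e = {u, w}" "arc g" "path_image g = A e" "pathstart g = p u" "pathfinish g = p w"
  using graph_embedding_edgeD(2)[OF embedding assms] by blast

lemma chord_inter_sphere:
  assumes "e \<in> E" "y \<in> convex hull (p ` e)" "y \<in> sphere z r"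
  shows "y \<in> p ` e"
proof -
  obtain u w where e: "e = {u, w}" "u \<in> V" "w \<in> V"
    using edge_ends[OF assms(1)] by metis
  then have "p u \<in> cball z r" "p w \<in> cball z r" "y \<in> closed_segment (p u) (p w)"
    using vertices_on_sphere assms(2) by (auto simp: segment_convex_hull)
  then have "y = p u \<or> y = p w"
    using closed_segment_inter_sphere assms(3) by blast
  then show ?thesis
    using e(1) by blast
qed

lemma chord_inter_boundary_edge:
  assumes "e \<in> E" "f \<in> E" "A f \<subseteq> sphere z r"
  shows "convex hull (p ` e) \<inter> A f = p ` (e \<inter> f)"
proof
  show "convex hull (p ` e) \<inter> A f \<subseteq> p ` (e \<inter> f)"
  proof
    fix y assume y: "y \<in> convex hull (p ` e) \<inter> A f"
    then obtain v where "v \<in> e" "y = p v"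
      using chord_inter_sphere[OF assms(1)] assms(3) by blast
    moreover have "v \<in> V"
      using simple assms(1) \<open>v \<in> e\<close> by (auto simp: simple_graph_def)
    ultimately show "y \<in> p ` (e \<inter> f)"
      using graph_embedding_vertexD[OF embedding assms(2)] y by blast
  qed
  show "p ` (e \<inter> f) \<subseteq> convex hull (p ` e) \<inter> A f"
    using graph_embedding_vertex_in_edge_image[OF embedding assms(2)] hull_subset by fastforce
qed

lemma edge_other_end:
  assumes "e \<in> E" "y \<in> e"
  obtains u where "e = {y, u}" "u \<noteq> y" "u \<in> V" "y \<in> V"
  using edge_ends[OF assms(1)] assms(2) by (metis insert_commute insertE singletonD)

lemma chord_inter_chord:
  assumes "e \<in> E" "f \<in> E" "e \<noteq> f"
  shows "convex hull (p ` e) \<inter> convex hull (p ` f) = p ` (e \<inter> f)"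
proof (cases "e \<inter> f = {}")
  case False
  then obtain y where "y \<in> e" "y \<in> f"
    by blast
  obtain u w where u: "e = {y, u}" "u \<noteq> y" "u \<in> V" "y \<in> V" and w: "f = {y, w}" "w \<noteq> y" "w \<in> V"
    using edge_other_end[OF assms(1) \<open>y \<in> e\<close>] edge_other_end[OF assms(2) \<open>y \<in> f\<close>] by metis
  have "u \<noteq> w"
    using assms(3) u(1) w(1) by blast
  have "closed_segment (p y) (p u) \<inter> closed_segment (p y) (p w) = {p y}"
    by (rule chords_common_endpoint[where z = z and r = r])
       (use vertices_on_sphere vertex_images_distinct u w \<open>u \<noteq> w\<close> in auto)
  then have "convex hull (p ` e) \<inter> convex hull (p ` f) = {p y}"
    using u(1) w(1) by (simp add: segment_convex_hull)
  moreover have "e \<inter> f = {y}"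
    using u(1,2) w(1,2) \<open>u \<noteq> w\<close> by auto
  ultimately show ?thesis
    by simp
next
  case True
  obtain u w g where g: "e = {u, w}" "arc g" "path_image g = A e" "pathstart g = p u" "pathfinish g = p w"
    using edge_image_is_arc[OF assms(1)] by blast
  obtain u' w' h where h: "f = {u', w'}" "arc h" "path_image h = A f" "pathstart h = p u'" "pathfinish h = p w'"
    using edge_image_is_arc[OF assms(2)] by blast
  have V: "u \<in> V" "w \<in> V" "u' \<in> V" "w' \<in> V" "u \<noteq> w" "u' \<noteq> w'"
    using edge_ends[OF assms(1)] edge_ends[OF assms(2)] g(1) h(1) by (metis doubleton_eq_iff)+
  have "path_image g \<inter> path_image h = {}"
    using graph_embedding_interD[OF embedding assms] True g(3) h(3) by simp
  have "closed_segment (p u) (p w) \<inter> closed_segment (p u') (p w') = {}"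
  proof (rule ccontr)
    assume "closed_segment (p u) (p w) \<inter> closed_segment (p u') (p w') \<noteq> {}"
    then have "path_image g \<inter> path_image h \<noteq> {}"
      using g(2-5) h(2-5) V True vertices_on_sphere vertex_images_distinct
        graph_embedding_edgeD(1)[OF embedding assms(1)] graph_embedding_edgeD(1)[OF embedding assms(2)]
      by (intro paths_meet_if_chords_cross[where z = z and r = r])
         (auto simp: g(1) h(1) arc_imp_path)
    then show False
      using \<open>path_image g \<inter> path_image h = {}\<close> by blast
  qed
  then show ?thesis
    using g(1) h(1) True by (simp add: segment_convex_hull)
qed

lemma chord_is_arc:
  assumes "e \<in> E"
  shows "convex hull (p ` e) \<subseteq> cball z r"
    and "\<exists>u w g. e = {u, w} \<and> arc g \<and> path_image g = convex hull (p ` e) \<and>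
                 pathstart g = p u \<and> pathfinish g = p w"
proof -
  obtain u w where uw: "e = {u, w}" "u \<noteq> w" "u \<in> V" "w \<in> V"
    using edge_ends[OF assms] by blast
  then have "convex hull (p ` e) = closed_segment (p u) (p w)"
    by (simp add: segment_convex_hull)
  moreover have "closed_segment (p u) (p w) \<subseteq> cball z r"
    using vertices_on_sphere uw by (intro closed_segment_subset) auto
  moreover have "arc (linepath (p u) (p w))"
    using vertex_images_distinct uw by (simp add: arc_linepath)
  ultimately show "convex hull (p ` e) \<subseteq> cball z r"
    "\<exists>u w g. e = {u, w} \<and> arc g \<and> path_image g = convex hull (p ` e) \<and>
                 pathstart g = p u \<and> pathfinish g = p w"
    using uw(1) by (metis path_image_linepath pathstart_linepath pathfinish_linepath)+
qed

lemma vertex_in_chord: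
  assumes "e \<in> E" "v \<in> V" "p v \<in> convex hull (p ` e)"
  shows "v \<in> e"
proof -
  have "p v \<in> p ` e"
    using chord_inter_sphere[OF assms(1,3)] vertices_on_sphere assms(2) by blast
  then obtain v' where "v' \<in> e" "p v = p v'"
    by blast
  moreover have "v' \<in> V"
    using edge_ends[OF assms(1)] \<open>v' \<in> e\<close> by blast
  ultimately show ?thesis
    using vertex_images_distinct assms(2) by metis
qed

lemma chord_drawing_embedding:
  assumes "\<forall>e\<in>C. A e \<subseteq> sphere z r"
  shows "graph_embedding (cball z r) V E p (chord_drawing C p A)"
proof -
  let ?A' = "chord_drawing C p A"
  have edge_cball: "?A' e \<subseteq> cball z r"
    and edge_arc: "\<exists>u w g. e = {u, w} \<and> arc g \<and> path_image g = ?A' e \<and> pathstart g = p u \<and> pathfinish g = p w"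
    if "e \<in> E" for e
    using graph_embedding_edgeD[OF embedding that] chord_is_arc[OF that] by (simp_all add: chord_drawing_def)
  have intersections: "?A' e \<inter> ?A' f = p ` (e \<inter> f)" if "e \<in> E" "f \<in> E" "e \<noteq> f" for e f
  proof (cases "e \<in> C"; cases "f \<in> C")
    assume "e \<in> C" "f \<in> C"
    then show ?thesis
      using graph_embedding_interD[OF embedding that] by (simp add: chord_drawing_def)
  next
    assume "e \<in> C" "f \<notin> C"
    then show ?thesis
      using chord_inter_boundary_edge[OF that(2,1)] assms by (simp add: chord_drawing_def Int_commute)
  next
    assume "e \<notin> C" "f \<in> C"
    then show ?thesis
      using chord_inter_boundary_edge[OF that(1,2)] assms by (simp add: chord_drawing_def)
  next
    assume "e \<notin> C" "f \<notin> C"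
    then show ?thesis
      using chord_inter_chord[OF that] by (simp add: chord_drawing_def)
  qed
  have incidences: "v \<in> e" if "e \<in> E" "v \<in> V" "p v \<in> ?A' e" for e v
    using graph_embedding_vertexD[OF embedding] vertex_in_chord that
    by (cases "e \<in> C") (simp_all add: chord_drawing_def)
  have "inj_on p V" "p ` V \<subseteq> cball z r"
    using embedding by (simp_all add: graph_embedding_def)
  then show ?thesis
    unfolding graph_embedding_def
    using edge_arc by (simp add: edge_cball intersections incidences)
qed

lemma straight_edge_eq_chord:
  assumes "e \<in> E" "straight_segment (A e)"
  shows "A e = convex hull (p ` e)"
proof -
  obtain a b where ab: "A e = closed_segment a b"
    using assms(2) by (auto simp: straight_segment_def)
  obtain u w where uw: "e = {u, w}" "u \<noteq> w" "u \<in> V" "w \<in> V"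
    using edge_ends[OF assms(1)] by blast
  have "a \<in> cball z r" "b \<in> cball z r"
    using graph_embedding_edgeD(1)[OF embedding assms(1)] ab by auto
  moreover have "p u \<in> closed_segment a b" "p w \<in> closed_segment a b"
    using graph_embedding_vertex_in_edge_image[OF embedding assms(1)] uw(1) ab by auto
  ultimately have "p u \<in> {a, b}" "p w \<in> {a, b}"
    using closed_segment_inter_sphere vertices_on_sphere uw(3,4) by blast+
  moreover have "p u \<noteq> p w"
    using vertex_images_distinct uw by blast
  ultimately have "closed_segment a b = closed_segment (p u) (p w)"
    by (auto simp: closed_segment_commute)
  then show ?thesis
    using ab uw(1) by (simp add: segment_convex_hull)
qed

lemma chord_straight:
  assumes "e \<in> E"
  shows "straight_segment (convex hull (p ` e))"
proof -
  obtain u w where "e = {u, w}" "u \<noteq> w" "u \<in> V" "w \<in> V"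
    using edge_ends[OF assms] by blast
  then show ?thesis
    using vertex_images_distinct unfolding straight_segment_def by (metis image_empty image_insert segment_convex_hull)
qed

end

theorem lemma4p4:
  fixes V :: "'v set" and E C :: "'v set set"
    and c :: complex and r :: real
    and p :: "'v \<Rightarrow> complex" and A :: "'v set \<Rightarrow> complex set"
  assumes "simple_graph V E"
    and "two_connected V E"
    and "outerplanar V E"
    and "hamilton_cycle V E C"
    and "r > 0"
    and "graph_embedding (cball c r) V E p A"
    and "\<Union>(A ` C) = sphere c r"
  shows "\<exists>p' A'. graph_embedding (cball c r) V E p' A' \<and>
           (\<forall>e \<in> E - C. straight_segment (A' e)) \<and>
           (\<forall>e \<in> E. (e \<in> C \<or> straight_segment (A e)) \<longrightarrow>
               A' e = A e \<and> (\<forall>v \<in> e. p' v = p v))"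
proof -
  have cycle_on_sphere: "\<forall>e\<in>C. A e \<subseteq> sphere c r"
    using assms(7) by blast
  have "p ` V \<subseteq> sphere c r"
  proof
    fix q assume "q \<in> p ` V"
    then obtain v e where "q = p v" "e \<in> C" "v \<in> e"
      using hamilton_cycle_covers_vertices[OF assms(4)] by blast
    moreover have "C \<subseteq> E"
      using assms(4) by (simp add: hamilton_cycle_def)
    ultimately show "q \<in> sphere c r"
      using graph_embedding_vertex_in_edge_image[OF assms(6)] cycle_on_sphere by blast
  qed
  then interpret boundary_vertex_embedding V E p A c r
    using assms(1,6) by unfold_locales
  have "graph_embedding (cball c r) V E p (chord_drawing C p A)"
    using chord_drawing_embedding[OF cycle_on_sphere] .
  moreover have "straight_segment (chord_drawing C p A e)" if "e \<in> E - C" for e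
    using chord_straight that by (simp add: chord_drawing_def)
  moreover have "chord_drawing C p A e = A e" if "e \<in> E" "e \<in> C \<or> straight_segment (A e)" for e
    using straight_edge_eq_chord that by (auto simp: chord_drawing_def)
  ultimately show ?thesis
    by blast
qed

end
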